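(* Let $n\geq 3$ and let $G\in\mathcal{G}_{2n}$ with $F(G)=n-1$ be minimal. Then $G$ is not $2$-extendable if and only if $G$ has a perfect matching $M=\{u_kv_k : k=1,\dots,n\}$ with $f(G,M)=n-1$ such that: $\{v_1,\dots,v_{n-1}\}$ and $\{u_1,\dots,u_{n-1}\}$ are independent sets of $G$; $G[\{u_1,\dots,u_n,v_n\}]$ contains at least two independent edges; $\{v_iv_n,\ v_ju_n\}\subseteq E(G)$ for some $i\neq j$ with $1\leq i,j\leq n-1$; and for every $1\leq k\leq n-1$ the induced subgraph $G[\{u_n,v_n,u_k,v_k\}]$ is exactly a $4$-cycle.
   Context: All graphs are finite and simple. $\mathcal{G}_{2n}$ denotes the set of all graphs with $2n$ vertices that have a perfect matching. For a perfect matching $M$ of $G$, a forcing set of $M$ is a subset $S\subseteq M$ contained in no other perfect matching of $G$; $f(G,M)$ is the minimum size of a forcing set of $M$, and $F(G)$ is the maximum of $f(G,M)$ over all perfect matchings $M$. A graph $G\in\mathcal{G}_{2n}$ with $F(G)=n-1$ is minimal if $F(G-e)\leq n-2$ for each edge $e$ of $G$. A connected graph with at least $2l+2$ vertices is $l$-extendable if it has a perfect matching and every matching of size $l$ is contained in a perfect matching. *)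

theory Defs
  imports Main
begin

type_synonym 'a graph = "'a set \<times> 'a set set"

definition verts :: "'a graph \<Rightarrow> 'a set" where "verts G = fst G"
definition edges :: "'a graph \<Rightarrow> 'a set set" where "edges G = snd G"

definition simple_graph :: "'a graph \<Rightarrow> bool" where
  "simple_graph G \<longleftrightarrow> finite (verts G) \<and> (\<forall>e\<in>edges G. e \<subseteq> verts G \<and> card e = 2)"

definition matching :: "'a graph \<Rightarrow> 'a set set \<Rightarrow> bool" where
  "matching G M \<longleftrightarrow> M \<subseteq> edges G \<and> (\<forall>e1\<in>M. \<forall>e2\<in>M. e1 \<noteq> e2 \<longrightarrow> e1 \<inter> e2 = {})"

definition perfect_matching :: "'a graph \<Rightarrow> 'a set set \<Rightarrow> bool" where
  "perfect_matching G M \<longleftrightarrow> matching G M \<and> \<Union>M = verts G"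

definition has_perfect_matching :: "'a graph \<Rightarrow> bool" where
  "has_perfect_matching G \<longleftrightarrow> (\<exists>M. perfect_matching G M)"

definition graphs_pm :: "nat \<Rightarrow> 'a graph set" where
  "graphs_pm n = {G. simple_graph G \<and> card (verts G) = 2 * n \<and> has_perfect_matching G}"

definition forcing_set :: "'a graph \<Rightarrow> 'a set set \<Rightarrow> 'a set set \<Rightarrow> bool" where
  "forcing_set G M S \<longleftrightarrow> S \<subseteq> M \<and> (\<forall>M'. perfect_matching G M' \<and> S \<subseteq> M' \<longrightarrow> M' = M)"

definition forcing_number :: "'a graph \<Rightarrow> 'a set set \<Rightarrow> nat" where
  "forcing_number G M = Inf {card S | S. forcing_set G M S}"

text \<open>F(G): maximum forcing number over all perfect matchings
  (the nat supremum; it is 0 if G has no perfect matching).\<close>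
definition max_forcing_number :: "'a graph \<Rightarrow> nat" where
  "max_forcing_number G = Sup {forcing_number G M | M. perfect_matching G M}"

definition delete_edge :: "'a graph \<Rightarrow> 'a set \<Rightarrow> 'a graph" where
  "delete_edge G e = (verts G, edges G - {e})"

definition minimal_Fn1 :: "nat \<Rightarrow> 'a graph \<Rightarrow> bool" where
  "minimal_Fn1 n G \<longleftrightarrow> max_forcing_number G = n - 1 \<and>
     (\<forall>e\<in>edges G. max_forcing_number (delete_edge G e) \<le> n - 2)"

definition adj :: "'a graph \<Rightarrow> 'a \<Rightarrow> 'a \<Rightarrow> bool" where
  "adj G x y \<longleftrightarrow> {x, y} \<in> edges G"

definition connected_graph :: "'a graph \<Rightarrow> bool" where
  "connected_graph G \<longleftrightarrow> (\<forall>x\<in>verts G. \<forall>y\<in>verts G. (adj G)\<^sup>*\<^sup>* x y)"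

definition extendable :: "nat \<Rightarrow> 'a graph \<Rightarrow> bool" where
  "extendable l G \<longleftrightarrow> connected_graph G \<and> card (verts G) \<ge> 2 * l + 2 \<and> has_perfect_matching G \<and>
     (\<forall>N. matching G N \<and> card N = l \<longrightarrow> (\<exists>M. perfect_matching G M \<and> N \<subseteq> M))"

definition independent_set :: "'a graph \<Rightarrow> 'a set \<Rightarrow> bool" where
  "independent_set G S \<longleftrightarrow> S \<subseteq> verts G \<and> (\<forall>x\<in>S. \<forall>y\<in>S. {x, y} \<notin> edges G)"

definition induced_edges :: "'a graph \<Rightarrow> 'a set \<Rightarrow> 'a set set" where
  "induced_edges G S = {e \<in> edges G. e \<subseteq> S}"

definition has_two_indep_edges :: "'a graph \<Rightarrow> 'a set \<Rightarrow> bool" where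
  "has_two_indep_edges G S \<longleftrightarrow> (\<exists>e1\<in>induced_edges G S. \<exists>e2\<in>induced_edges G S. e1 \<inter> e2 = {})"

definition induced_C4 :: "'a graph \<Rightarrow> 'a set \<Rightarrow> bool" where
  "induced_C4 G S \<longleftrightarrow> (\<exists>a b c d. distinct [a, b, c, d] \<and> S = {a, b, c, d} \<and>
      induced_edges G S = {{a, b}, {b, c}, {c, d}, {d, a}})"

end

theory Submission
  imports Defs
begin

text \<open>Let M be a perfect matching with f(G, M) = n - 1. Any two M-edges span an M-alternating
  4-cycle, since otherwise the remaining n - 2 M-edges would force M; by minimality they span
  exactly one, since otherwise deleting an edge of one cycle would keep f(G - e, M) = n - 1.
  Hence for vertices a, b on different M-edges exactly one of a b and a (mate b) is an edge, so
  any two M-edges induce a 4-cycle and G is connected. If G is not 2-extendable, two disjoint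
  edges lying in no perfect matching can be normalised to x y and (mate x) z with (mate y) z an
  edge. Short M-alternating paths from mate y to mate z are then impossible, and this forces the
  neighbours of mate y outside the M-edge of x to be an independent set containing one end of
  every other M-edge; numbering them u 1, ..., u (n - 1) and putting u n = x gives the labelling.
  Conversely, in a labelled graph the n - 1 independent vertices v k can only be matched into
  the other n + 1 vertices, which is impossible once two independent edges among those are fixed.\<close>

lemma finite_edges: "simple_graph G \<Longrightarrow> finite (edges G)"
  unfolding simple_graph_def by (meson Pow_iff finite_Pow_iff finite_subset subsetI)

lemma finite_perfect_matchings: "simple_graph G \<Longrightarrow> finite {M. perfect_matching G M}"
  by (rule finite_subset[of _ "Pow (edges G)"])
     (auto simp: perfect_matching_def matching_def finite_edges)

lemma forcing_number_le_max_forcing_number: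
  assumes "simple_graph G" "perfect_matching G M"
  shows "forcing_number G M \<le> max_forcing_number G"
  unfolding max_forcing_number_def
  using assms finite_perfect_matchings[OF assms(1)] by (auto intro!: cSup_upper bdd_above_finite)

lemma max_forcing_number_attained:
  assumes "simple_graph G" "has_perfect_matching G"
  obtains M where "perfect_matching G M" "forcing_number G M = max_forcing_number G"
proof -
  let ?F = "{forcing_number G M | M. perfect_matching G M}"
  have fin: "finite ?F" using finite_perfect_matchings[OF assms(1)] by simp
  have ne: "?F \<noteq> {}" using assms(2) unfolding has_perfect_matching_def by blast
  have "Max ?F \<in> ?F" using fin ne by (rule Max_in)
  moreover have "max_forcing_number G = Max ?F"
    unfolding max_forcing_number_def using fin ne by (rule cSup_eq_Max)
  ultimately show ?thesis using that by auto
qed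

section \<open>Perfect matchings and exchanges\<close>

definition coextendable :: "'a graph \<Rightarrow> 'a set \<Rightarrow> 'a set \<Rightarrow> bool" where
  "coextendable G e f \<longleftrightarrow> (\<exists>M. perfect_matching G M \<and> e \<in> M \<and> f \<in> M)"

text \<open>An exchange replaces the M-edges at the vertices of a list by the edges of a list of pairs;
  listing their endpoints turns the disjointness of the new edges into distinctness of a list.\<close>

definition pair_edges :: "('a \<times> 'a) list \<Rightarrow> 'a set set" where
  "pair_edges ps = (\<lambda>(a, b). {a, b}) ` set ps"

definition pair_verts :: "('a \<times> 'a) list \<Rightarrow> 'a list" where
  "pair_verts ps = concat (map (\<lambda>(a, b). [a, b]) ps)"

lemma pairwise_disjnt_pair_edges:
  assumes "distinct (pair_verts ps)"
  shows "pairwise disjnt (pair_edges ps)"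
proof (rule pairwiseI)
  fix e f assume "e \<in> pair_edges ps" "f \<in> pair_edges ps" "e \<noteq> f"
  then obtain a b c d where "(a, b) \<in> set ps" "(c, d) \<in> set ps" "e = {a, b}" "f = {c, d}" "(a, b) \<noteq> (c, d)"
    unfolding pair_edges_def by auto
  then have "[a, b] \<in> set (map (\<lambda>(a, b). [a, b]) ps)" "[c, d] \<in> set (map (\<lambda>(a, b). [a, b]) ps)"
    "[a, b] \<noteq> [c, d]" by force+
  then show "disjnt e f"
    using assms \<open>e = {a, b}\<close> \<open>f = {c, d}\<close>
    unfolding pair_verts_def distinct_concat_iff disjnt_def by (metis list.set(1,2))
qed

locale pm_graph =
  fixes G :: "'a graph" and M :: "'a set set"
  assumes simple: "simple_graph G" and perfect: "perfect_matching G M"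
begin

lemma finite_verts: "finite (verts G)"
  using simple by (simp add: simple_graph_def)

lemma card_edge: "e \<in> edges G \<Longrightarrow> card e = 2"
  using simple by (simp add: simple_graph_def)

lemma edge_subset_verts: "e \<in> edges G \<Longrightarrow> e \<subseteq> verts G"
  using simple by (simp add: simple_graph_def)

lemma edge_verts: "{a, b} \<in> edges G \<Longrightarrow> a \<in> verts G \<and> b \<in> verts G"
  using edge_subset_verts by blast

lemma edge_neq: "{a, b} \<in> edges G \<Longrightarrow> a \<noteq> b"
  using card_edge by fastforce

lemma M_subset_edges: "M \<subseteq> edges G"
  using perfect by (simp add: perfect_matching_def matching_def)

lemma M_disjoint: "m1 \<in> M \<Longrightarrow> m2 \<in> M \<Longrightarrow> m1 \<noteq> m2 \<Longrightarrow> m1 \<inter> m2 = {}"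
  using perfect by (simp add: perfect_matching_def matching_def)

lemma Union_M: "\<Union>M = verts G"
  using perfect by (simp add: perfect_matching_def)

lemma finite_M: "finite M"
  using M_subset_edges finite_edges[OF simple] finite_subset by blast

lemma card_verts: "card (verts G) = 2 * card M"
proof -
  have "card (\<Union>M) = sum card M"
    using M_disjoint finite_verts Union_M
    by (intro card_Union_disjoint) (auto simp: pairwise_def disjnt_def intro: finite_subset)
  also have "\<dots> = 2 * card M"
    using M_subset_edges card_edge by (simp add: subset_iff)
  finally show ?thesis using Union_M by simp
qed

definition mate :: "'a \<Rightarrow> 'a" where
  "mate a = (THE b. {a, b} \<in> M)"

lemma mate_unique:
  assumes "{a, b} \<in> M" "{a, c} \<in> M"
  shows "b = c"
proof -
  have "{a, b} = {a, c}" using M_disjoint[OF assms] by blast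
  moreover have "a \<noteq> b" "a \<noteq> c" using assms M_subset_edges edge_neq by blast+
  ultimately show ?thesis by (metis doubleton_eq_iff)
qed

lemma mate_eq: "{a, b} \<in> M \<Longrightarrow> mate a = b"
  unfolding mate_def using mate_unique by blast

lemma mate_in_M:
  assumes "a \<in> verts G" shows "{a, mate a} \<in> M"
proof -
  obtain m where m: "m \<in> M" "a \<in> m" using Union_M assms by auto
  obtain p q where "m = {p, q}"
    using card_edge M_subset_edges m(1) by (meson card_2_iff subsetD)
  then have "m = {a, q} \<or> m = {a, p}" using m(2) by blast
  then have "{a, q} \<in> M \<or> {a, p} \<in> M" using m(1) by metis
  then show ?thesis using mate_eq by blast
qed

lemma edge_mate: "a \<in> verts G \<Longrightarrow> {a, mate a} \<in> edges G"
  using mate_in_M M_subset_edges by blast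

lemma mate_in_verts: "a \<in> verts G \<Longrightarrow> mate a \<in> verts G"
  using edge_mate edge_verts by blast

lemma mate_neq: "a \<in> verts G \<Longrightarrow> mate a \<noteq> a"
  using edge_neq[OF edge_mate] by (rule not_sym)

lemma mate_mate [simp]: "a \<in> verts G \<Longrightarrow> mate (mate a) = a"
  using mate_eq[of "mate a" a] mate_in_M by (simp add: insert_commute)

lemma mate_inj: "a \<in> verts G \<Longrightarrow> b \<in> verts G \<Longrightarrow> mate a = mate b \<Longrightarrow> a = b"
  using mate_mate by metis

lemma M_edge_eq:
  assumes "m \<in> M" "a \<in> m"
  shows "m = {a, mate a}"
proof -
  have "{a, mate a} \<in> M" using assms Union_M mate_in_M by blast
  moreover have "m \<inter> {a, mate a} \<noteq> {}" using assms(2) by blast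
  ultimately show ?thesis using M_disjoint assms(1) by blast
qed

lemma perfect_matching_exchange:
  assumes T: "T \<subseteq> M" and A: "A \<subseteq> edges G" and "pairwise disjnt A" and AT: "\<Union>A = \<Union>T"
  shows "perfect_matching G ((M - T) \<union> A)"
  unfolding perfect_matching_def matching_def
proof (intro conjI ballI impI)
  show "M - T \<union> A \<subseteq> edges G" using M_subset_edges A by blast
  show "\<Union>(M - T \<union> A) = verts G" using AT T Union_M by blast
  have MA: "m \<inter> a = {}" if "m \<in> M - T" "a \<in> A" for m a
  proof -
    have "m \<inter> t = {}" if "t \<in> T" for t using M_disjoint \<open>m \<in> M - T\<close> T that by blast
    then show ?thesis using \<open>a \<in> A\<close> AT by blast
  qed
  fix e f assume "e \<in> M - T \<union> A" "f \<in> M - T \<union> A" "e \<noteq> f"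
  then show "e \<inter> f = {}"
    using MA[of e f] MA[of f e] M_disjoint \<open>pairwise disjnt A\<close>
    unfolding pairwise_def disjnt_def by blast
qed

lemma exchange_along_pairs:
  assumes "set ws \<subseteq> verts G" "pair_edges ps \<subseteq> edges G" "distinct (pair_verts ps)"
    and "set (pair_verts ps) = set ws \<union> mate ` set ws"
  shows "perfect_matching G ((M - (\<lambda>w. {w, mate w}) ` set ws) \<union> pair_edges ps)"
proof (rule perfect_matching_exchange)
  show "(\<lambda>w. {w, mate w}) ` set ws \<subseteq> M" using assms(1) mate_in_M by auto
  have "\<Union>(pair_edges ps) = set (pair_verts ps)"
    unfolding pair_edges_def pair_verts_def by auto
  then show "\<Union>(pair_edges ps) = \<Union>((\<lambda>w. {w, mate w}) ` set ws)" using assms(4) by auto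
qed (use assms pairwise_disjnt_pair_edges in auto)

lemma coextendable_by_exchange:
  assumes "set ws \<subseteq> verts G" "pair_edges ps \<subseteq> edges G" "distinct (pair_verts ps)"
    and "set (pair_verts ps) = set ws \<union> mate ` set ws"
    and "(a, b) \<in> set ps" "(c, d) \<in> set ps"
  shows "coextendable G {a, b} {c, d}"
  unfolding coextendable_def pair_edges_def
  using exchange_along_pairs[OF assms(1-4)] assms(5,6) unfolding pair_edges_def by blast

lemma superset_eq:
  assumes pm': "perfect_matching G M'" and sub: "M \<subseteq> M'"
  shows "M' = M"
proof
  have E': "M' \<subseteq> edges G" and disj: "\<And>e f. e \<in> M' \<Longrightarrow> f \<in> M' \<Longrightarrow> e \<noteq> f \<Longrightarrow> e \<inter> f = {}"
    and V': "\<Union>M' = verts G"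
    using pm' unfolding perfect_matching_def matching_def by auto
  show "M' \<subseteq> M"
  proof
    fix e assume e: "e \<in> M'"
    then obtain a b where "e = {a, b}" using E' card_edge by (meson card_2_iff subsetD)
    then have a: "a \<in> e" by simp
    have aV: "a \<in> verts G" using a e V' by blast
    have "{a, mate a} \<in> M'" using mate_in_M[OF aV] sub by blast
    then have "e = {a, mate a}" using disj[OF e] a by blast
    then show "e \<in> M" using mate_in_M[OF aV] by simp
  qed
qed (rule sub)

lemma forcing_set_M: "forcing_set G M M"
  unfolding forcing_set_def using superset_eq by simp

lemma forcing_number_le: "forcing_set G M S \<Longrightarrow> forcing_number G M \<le> card S"
  unfolding forcing_number_def by (rule cInf_lower) auto

section \<open>Alternating squares and the forcing number\<close>

definition apart :: "'a \<Rightarrow> 'a \<Rightarrow> bool" where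
  "apart a b \<longleftrightarrow> a \<in> verts G \<and> b \<in> verts G \<and> b \<noteq> a \<and> b \<noteq> mate a"

lemma apart_verts: "apart a b \<Longrightarrow> a \<in> verts G" "apart a b \<Longrightarrow> b \<in> verts G"
  unfolding apart_def by auto

lemma apart_distinct:
  assumes "apart a b"
  shows "a \<noteq> b" "b \<noteq> a" "a \<noteq> mate a" "mate a \<noteq> a" "b \<noteq> mate b" "mate b \<noteq> b"
    "a \<noteq> mate b" "mate b \<noteq> a" "b \<noteq> mate a" "mate a \<noteq> b" "mate a \<noteq> mate b" "mate b \<noteq> mate a"
proof -
  have V: "a \<in> verts G" "b \<in> verts G" and ne: "b \<noteq> a" "b \<noteq> mate a"
    using assms unfolding apart_def by auto
  have "mate b \<noteq> a" using ne(2) mate_mate[OF V(2)] by metis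
  moreover have "mate a \<noteq> mate b" using ne(1) mate_inj[OF V] by metis
  ultimately show "a \<noteq> b" "b \<noteq> a" "a \<noteq> mate a" "mate a \<noteq> a" "b \<noteq> mate b" "mate b \<noteq> b"
    "a \<noteq> mate b" "mate b \<noteq> a" "b \<noteq> mate a" "mate a \<noteq> b" "mate a \<noteq> mate b" "mate b \<noteq> mate a"
    using ne mate_neq[OF V(1)] mate_neq[OF V(2)] by auto
qed

lemma apart_sym:
  assumes "apart a b" shows "apart b a"
  using apart_distinct[OF assms] apart_verts[OF assms] unfolding apart_def by auto

lemma apart_mate:
  assumes "apart a b" shows "apart a (mate b)" "apart (mate a) b"
  using apart_distinct[OF assms] apart_verts[OF assms] mate_in_verts[OF apart_verts(1)[OF assms]]
    mate_in_verts[OF apart_verts(2)[OF assms]] mate_mate[OF apart_verts(1)[OF assms]]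
  unfolding apart_def by auto

lemma apart_if_edge:
  assumes "{a, b} \<in> edges G" "b \<noteq> mate a" shows "apart a b"
  using edge_verts[OF assms(1)] edge_neq[OF assms(1)] assms(2) unfolding apart_def by auto

lemma not_in_M_if_apart:
  assumes "apart a b" shows "{a, b} \<notin> M"
  using mate_eq[of a b] apart_distinct(9)[OF assms] by blast

text \<open>Together with the M-edges at a and b, the square of a and b is an M-alternating 4-cycle.\<close>

definition square :: "'a \<Rightarrow> 'a \<Rightarrow> 'a set set" where
  "square a b = {{a, b}, {mate a, mate b}}"

definition swappable :: bool where
  "swappable \<longleftrightarrow> (\<forall>a b. apart a b \<longrightarrow> square a b \<subseteq> edges G \<or> square a (mate b) \<subseteq> edges G)"

lemma square_exchange:
  assumes "apart a b" "square a b \<subseteq> edges G"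
  shows "perfect_matching G ((M - {{a, mate a}, {b, mate b}}) \<union> square a b)"
  using exchange_along_pairs[of "[a, b]" "[(a, b), (mate a, mate b)]"] assms apart_distinct[OF assms(1)]
    apart_verts[OF assms(1)] unfolding square_def by (auto simp: pair_edges_def pair_verts_def)

lemma forcing_number_ge_if_swappable:
  assumes swappable
  shows "card M - 1 \<le> forcing_number G M"
  unfolding forcing_number_def
proof (rule cInf_greatest)
  show "{card S |S. forcing_set G M S} \<noteq> {}" using forcing_set_M by blast
  fix k assume "k \<in> {card S |S. forcing_set G M S}"
  then obtain S where S: "forcing_set G M S" "k = card S" by blast
  have "S \<subseteq> M" using S(1) by (simp add: forcing_set_def)
  show "card M - 1 \<le> k"
  proof (rule ccontr)
    assume "\<not> card M - 1 \<le> k"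
    then have "\<not> card (M - S) \<le> Suc 0"
      using S(2) \<open>S \<subseteq> M\<close> finite_M by (simp add: card_Diff_subset finite_subset)
    then obtain m1 m2 where m: "m1 \<in> M" "m2 \<in> M" "m1 \<notin> S" "m2 \<notin> S" "m1 \<noteq> m2"
      using card_le_Suc0_iff_eq[of "M - S"] finite_M by blast
    have "card m1 = 2" "card m2 = 2" using m(1,2) M_subset_edges card_edge by auto
    then obtain a b where ab: "a \<in> m1" "b \<in> m2" by (metis card_2_iff insertI1)
    have m_eq: "m1 = {a, mate a}" "m2 = {b, mate b}"
      using M_edge_eq[OF m(1) ab(1)] M_edge_eq[OF m(2) ab(2)] by auto
    have V: "a \<in> verts G" "b \<in> verts G" using ab m(1,2) Union_M by auto
    have "m1 \<inter> m2 = {}" using M_disjoint m(1,2,5) by blast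
    then have "apart a b" using ab m_eq V unfolding apart_def by auto
    then obtain c where c: "c = b \<or> c = mate b" "square a c \<subseteq> edges G"
      using assms[unfolded swappable_def, rule_format, of a b] by blast
    have "apart a c" using c(1) \<open>apart a b\<close> apart_mate(1) by blast
    have "{c, mate c} = m2" using c(1) m_eq mate_mate[OF V(2)] by (auto simp: insert_commute)
    then have "perfect_matching G ((M - {m1, m2}) \<union> square a c)"
      using square_exchange[OF \<open>apart a c\<close> c(2)] m_eq by simp
    moreover have "S \<subseteq> (M - {m1, m2}) \<union> square a c" using \<open>S \<subseteq> M\<close> m(3,4) by blast
    ultimately have "(M - {m1, m2}) \<union> square a c = M"
      using S(1) unfolding forcing_set_def by blast
    then show False using not_in_M_if_apart[OF \<open>apart a c\<close>] unfolding square_def by blast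
  qed
qed

lemma mate_in_Union_if_superset:
  assumes M': "perfect_matching G M'" "M - T \<subseteq> M'" and T: "T \<subseteq> M" and w: "w \<in> \<Union>T"
  shows "pm_graph.mate M' w \<in> \<Union>T"
proof (rule ccontr)
  interpret M': pm_graph G M' using simple M'(1) by unfold_locales
  assume t: "M'.mate w \<notin> \<Union>T"
  have wV: "w \<in> verts G" using w T Union_M by blast
  have tV: "M'.mate w \<in> verts G" using M'.mate_in_verts[OF wV] .
  have "{M'.mate w, mate (M'.mate w)} \<in> M - T" using t mate_in_M[OF tV] by blast
  then have "M'.mate (M'.mate w) = mate (M'.mate w)" using M'(2) M'.mate_eq by blast
  then have "mate (M'.mate w) = w" using M'.mate_mate[OF wV] by simp
  then have "M'.mate w = mate w" using mate_mate[OF tV] by metis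
  moreover obtain m where "m \<in> T" "w \<in> m" using w by blast
  ultimately show False using t M_edge_eq[of m w] T by blast
qed

lemma perfect_matching_cases_two_M_edges:
  assumes ab: "apart a b" and M': "perfect_matching G M'" "M - {{a, mate a}, {b, mate b}} \<subseteq> M'"
  shows "M \<subseteq> M' \<or> square a b \<subseteq> M' \<or> square a (mate b) \<subseteq> M'"
proof -
  interpret M': pm_graph G M' using simple M'(1) by unfold_locales
  note d = apart_distinct[OF ab]
  have V: "a \<in> verts G" "b \<in> verts G" using apart_verts[OF ab] by auto
  let ?W = "{a, mate a, b, mate b}"
  have W: "\<Union>{{a, mate a}, {b, mate b}} = ?W" by auto
  have closed: "M'.mate w \<in> ?W" if "w \<in> ?W" for w
    using mate_in_Union_if_superset[OF M'] mate_in_M V that unfolding W by auto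
  have WV: "w \<in> verts G" if "w \<in> ?W" for w
    using that V mate_in_verts by auto
  have in_M': "{w, M'.mate w} \<in> M'" if "w \<in> ?W" for w
    using M'.mate_in_M[OF WV[OF that]] .
  have sym: "M'.mate t = w" if "M'.mate w = t" "w \<in> ?W" for w t
    using M'.mate_mate[OF WV[OF that(2)]] that(1) by simp
  have neq: "M'.mate w \<noteq> w" if "w \<in> ?W" for w
    using M'.mate_neq[OF WV[OF that]] .
  have "M'.mate a \<in> ?W" using closed by simp
  then consider "M'.mate a = mate a" | "M'.mate a = b" | "M'.mate a = mate b"
    using neq[of a] by auto
  then show ?thesis
  proof cases
    case 1
    then have "M'.mate (mate a) = a" using sym[OF 1] by simp
    then have "M'.mate b \<noteq> a" "M'.mate b \<noteq> mate a"
      using 1 sym[of b a] sym[of b "mate a"] d by auto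
    moreover have "M'.mate b \<in> ?W" using closed by simp
    ultimately have "M'.mate b = mate b" using neq[of b] by auto
    then have "{a, mate a} \<in> M'" "{b, mate b} \<in> M'" using 1 in_M'[of a] in_M'[of b] by auto
    then show ?thesis using M'(2) by blast
  next
    case 2
    then have "M'.mate b = a" using sym[OF 2] by simp
    then have "M'.mate (mate a) \<noteq> a" "M'.mate (mate a) \<noteq> b"
      using 2 sym[of "mate a" a] sym[of "mate a" b] d by auto
    moreover have "M'.mate (mate a) \<in> ?W" using closed by simp
    ultimately have "M'.mate (mate a) = mate b" using neq[of "mate a"] by auto
    then show ?thesis using 2 in_M'[of a] in_M'[of "mate a"] unfolding square_def by auto
  next
    case 3
    then have "M'.mate (mate b) = a" using sym[OF 3] by simp
    then have "M'.mate (mate a) \<noteq> a" "M'.mate (mate a) \<noteq> mate b"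
      using 3 sym[of "mate a" a] sym[of "mate a" "mate b"] d by auto
    moreover have "M'.mate (mate a) \<in> ?W" using closed by simp
    ultimately have "M'.mate (mate a) = b" using neq[of "mate a"] by auto
    then show ?thesis
      using 3 in_M'[of a] in_M'[of "mate a"] mate_mate[OF V(2)] unfolding square_def by auto
  qed
qed

lemma swappable_if_forcing_number_ge:
  assumes fn: "card M - 1 \<le> forcing_number G M" and two: "2 \<le> card M"
  shows swappable
  unfolding swappable_def
proof (intro allI impI)
  fix a b assume ab: "apart a b"
  show "square a b \<subseteq> edges G \<or> square a (mate b) \<subseteq> edges G"
  proof (rule ccontr)
    assume no_square: "\<not> ?thesis"
    have V: "a \<in> verts G" "b \<in> verts G" using apart_verts[OF ab] by auto
    define S where "S = M - {{a, mate a}, {b, mate b}}"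
    have "forcing_set G M S"
      unfolding forcing_set_def
    proof (intro conjI allI impI)
      show "S \<subseteq> M" unfolding S_def by blast
      fix M' assume M': "perfect_matching G M' \<and> S \<subseteq> M'"
      then have "M' \<subseteq> edges G" by (simp add: perfect_matching_def matching_def)
      then have "M \<subseteq> M'"
        using perfect_matching_cases_two_M_edges[OF ab] M' no_square unfolding S_def by blast
      then show "M' = M" using superset_eq M' by blast
    qed
    moreover have "card S = card M - 2"
      unfolding S_def using mate_in_M V apart_distinct[OF ab] finite_M
      by (subst card_Diff_subset) (auto simp: doubleton_eq_iff)
    ultimately show False using forcing_number_le fn two by fastforce
  qed
qed

lemma not_in_M_if_in_square:
  assumes "apart a b" "e \<in> square a b"
  shows "e \<notin> M"
  using assms not_in_M_if_apart[OF assms(1)] not_in_M_if_apart[OF apart_mate(2)[OF apart_mate(1)[OF assms(1)]]]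
    mate_mate[OF apart_verts(2)[OF assms(1)]] unfolding square_def by auto

lemma squares_disjoint:
  assumes "apart a b"
  shows "square a b \<inter> square a (mate b) = {}"
  using apart_distinct[OF assms] mate_mate[OF apart_verts(2)[OF assms]]
  unfolding square_def by (auto simp: doubleton_eq_iff)

lemma square_swap:
  assumes "apart a b" "apart p q" "e \<in> square p q" "e \<in> square a (mate b)"
  shows "square p (mate q) = square a b"
proof -
  have V: "a \<in> verts G" "b \<in> verts G" using apart_verts[OF assms(1)] by auto
  have W: "p \<in> verts G" "q \<in> verts G" using apart_verts[OF assms(2)] by auto
  note mm = mate_mate[OF V(1)] mate_mate[OF V(2)] mate_mate[OF W(1)] mate_mate[OF W(2)]
  have "{p, q} = {a, mate b} \<or> {p, q} = {mate a, b} \<or> {mate p, mate q} = {a, mate b}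
      \<or> {mate p, mate q} = {mate a, b}"
  proof -
    have "e \<in> {{a, mate b}, {mate a, b}}" using assms(4) mm unfolding square_def by simp
    then show ?thesis using assms(3) unfolding square_def by blast
  qed
  then have "(p = a \<and> q = mate b) \<or> (p = mate b \<and> q = a) \<or> (p = mate a \<and> q = b) \<or> (p = b \<and> q = mate a)"
    unfolding doubleton_eq_iff by (metis mm)
  then show ?thesis
    unfolding square_def by (elim disjE conjE) (simp_all add: mm insert_commute)
qed

lemma pm_graph_delete_edge:
  assumes "e \<notin> M" shows "pm_graph (delete_edge G e) M"
proof
  have V: "verts (delete_edge G e) = verts G" and E: "edges (delete_edge G e) = edges G - {e}"
    by (simp_all add: delete_edge_def verts_def edges_def)
  show "simple_graph (delete_edge G e)"
    unfolding simple_graph_def V E using finite_verts edge_subset_verts card_edge by blast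
  show "perfect_matching (delete_edge G e) M"
    unfolding perfect_matching_def matching_def V E
    using M_subset_edges assms M_disjoint Union_M by blast
qed

text \<open>Only the M-edges at a and b have a square containing e, and their other square survives.\<close>

lemma swappable_delete_edge:
  assumes swap: swappable and ab: "apart a b" "square a b \<subseteq> edges G" and e: "e \<in> square a (mate b)"
  shows "pm_graph.swappable (delete_edge G e) M"
proof -
  have "e \<notin> M" by (rule not_in_M_if_in_square[OF apart_mate(1)[OF ab(1)] e])
  interpret H: pm_graph "delete_edge G e" M
    by (rule pm_graph_delete_edge) fact
  have HV: "verts (delete_edge G e) = verts G" and HE: "edges (delete_edge G e) = edges G - {e}"
    by (simp_all add: delete_edge_def verts_def edges_def)
  have H_apart: "H.apart p q \<longleftrightarrow> apart p q" for p q
    by (simp only: H.apart_def apart_def HV)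
  show ?thesis
    unfolding H.swappable_def H_apart HE
  proof (intro allI impI)
    fix p q assume pq: "apart p q"
    have "e \<notin> square a b" using squares_disjoint[OF ab(1)] e by blast
    have "square p q \<subseteq> edges G \<or> square p (mate q) \<subseteq> edges G"
      using swap[unfolded swappable_def, rule_format, OF pq] .
    moreover have "e \<in> square p q \<Longrightarrow> square p (mate q) = square a b"
      using square_swap[OF ab(1) pq _ e] by blast
    moreover have "e \<in> square p (mate q) \<Longrightarrow> square p q = square a b"
      using square_swap[OF ab(1) apart_mate(1)[OF pq] _ e] mate_mate apart_verts(2)[OF pq] by simp
    ultimately show "square p q \<subseteq> edges G - {e} \<or> square p (mate q) \<subseteq> edges G - {e}"
      using ab(2) \<open>e \<notin> square a b\<close> by blast
  qed
qed

lemma edge_iff_not_edge_mate_if_minimal: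
  assumes swap: swappable and two: "2 \<le> card M"
    and minimal: "\<forall>e\<in>edges G. max_forcing_number (delete_edge G e) \<le> card M - 2"
    and ab: "apart a b"
  shows "{a, b} \<in> edges G \<longleftrightarrow> {a, mate b} \<notin> edges G"
proof -
  have no_second_square: False
    if c: "apart a c" "square a c \<subseteq> edges G" and e: "e \<in> square a (mate c)" "e \<in> edges G" for c e
  proof -
    have "e \<notin> M" by (rule not_in_M_if_in_square[OF apart_mate(1)[OF c(1)] e(1)])
    interpret H: pm_graph "delete_edge G e" M
      by (rule pm_graph_delete_edge) fact
    have "card M - 1 \<le> forcing_number (delete_edge G e) M"
      using H.forcing_number_ge_if_swappable swappable_delete_edge[OF swap c e(1)] by blast
    also have "\<dots> \<le> max_forcing_number (delete_edge G e)"
      using forcing_number_le_max_forcing_number[OF H.simple H.perfect] .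
    also have "\<dots> \<le> card M - 2" using minimal e(2) by blast
    finally show False using two by linarith
  qed
  have b: "b \<in> verts G" using apart_verts(2)[OF ab] .
  have squares: "square a b \<subseteq> edges G \<or> square a (mate b) \<subseteq> edges G"
    using swap[unfolded swappable_def, rule_format, OF ab] .
  show ?thesis
  proof
    assume "{a, b} \<in> edges G"
    show "{a, mate b} \<notin> edges G"
    proof
      assume "{a, mate b} \<in> edges G"
      show False
        using squares no_second_square[OF ab, of "{a, mate b}"] \<open>{a, mate b} \<in> edges G\<close>
          no_second_square[OF apart_mate(1)[OF ab], of "{a, b}"] \<open>{a, b} \<in> edges G\<close> mate_mate[OF b]
        unfolding square_def by auto
    qed
  next
    assume "{a, mate b} \<notin> edges G"
    then show "{a, b} \<in> edges G" using squares unfolding square_def by auto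
  qed
qed

lemma card_independent_le:
  assumes I: "independent_set G I" and T: "T \<subseteq> M" "\<Union>T \<inter> I = {}"
  shows "card I \<le> card (verts G - I - \<Union>T)"
proof -
  have IV: "I \<subseteq> verts G" using I by (simp add: independent_set_def)
  have "mate ` I \<subseteq> verts G - I - \<Union>T"
  proof
    fix x assume "x \<in> mate ` I"
    then obtain w where w: "w \<in> I" "x = mate w" by blast
    have wV: "w \<in> verts G" using w(1) IV by blast
    have "mate w \<notin> I" using I w(1) edge_mate[OF wV] by (auto simp: independent_set_def)
    moreover have "mate w \<notin> \<Union>T"
    proof
      assume "mate w \<in> \<Union>T"
      then obtain t where "t \<in> T" "mate w \<in> t" by blast
      then have "w \<in> t" using M_edge_eq[of t "mate w"] T(1) mate_mate[OF wV] by auto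
      then show False using \<open>t \<in> T\<close> T(2) w(1) by blast
    qed
    ultimately show "x \<in> verts G - I - \<Union>T" using w mate_in_verts[OF wV] by blast
  qed
  moreover have "inj_on mate I" using mate_inj IV by (meson inj_onI subsetD)
  ultimately show ?thesis by (meson card_inj_on_le finite_Diff finite_verts)
qed

lemma labelled_partition:
  fixes u v :: "nat \<Rightarrow> 'a"
  assumes "card M = n" "1 \<le> n" and M: "M = (\<lambda>k. {u k, v k}) ` {1..n}"
  shows "verts G = v ` {1..n-1} \<union> (u ` {1..n} \<union> {v n})"
    and "v ` {1..n-1} \<inter> (u ` {1..n} \<union> {v n}) = {}"
    and "card (v ` {1..n-1}) = n - 1"
proof -
  have inj: "inj_on (\<lambda>k. {u k, v k}) {1..n}" using assms by (intro eq_card_imp_inj_on) auto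
  have fiber: "{u k, v k} \<in> M" if "k \<in> {1..n}" for k using M that by blast
  have fibers_disjoint: "{u k, v k} \<inter> {u l, v l} = {}" if "k \<in> {1..n}" "l \<in> {1..n}" "k \<noteq> l" for k l
    using M_disjoint[OF fiber[OF that(1)] fiber[OF that(2)]] inj that unfolding inj_on_def by blast
  have uv: "u k \<noteq> v k" if "k \<in> {1..n}" for k using edge_neq fiber[OF that] M_subset_edges by blast
  have n1: "{1..n} = insert n {1..n-1}" using assms(2) by auto
  show "verts G = v ` {1..n-1} \<union> (u ` {1..n} \<union> {v n})"
    using Union_M unfolding M n1 by auto
  have "v k \<noteq> u l" if "k \<in> {1..n-1}" "l \<in> {1..n}" for k l
  proof -
    have "k \<in> {1..n}" using that(1) by auto
    then show ?thesis using uv[of k] fibers_disjoint[of k l] that(2) by (cases "k = l") auto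
  qed
  moreover have "v k \<noteq> v n" if "k \<in> {1..n-1}" for k
  proof -
    have "k \<in> {1..n}" "k \<noteq> n" using that by auto
    then show ?thesis using fibers_disjoint[of k n] assms(2) by auto
  qed
  ultimately show "v ` {1..n-1} \<inter> (u ` {1..n} \<union> {v n}) = {}" by blast
  have "inj_on v {1..n-1}" using fibers_disjoint by (intro inj_onI) fastforce
  then show "card (v ` {1..n-1}) = n - 1" by (simp add: card_image)
qed

end

lemma not_2_extendable_if_labelled:
  fixes u v :: "nat \<Rightarrow> 'a"
  assumes simple: "simple_graph G" and "card (verts G) = 2 * n" "3 \<le> n"
    and pm: "perfect_matching G M" and M: "M = (\<lambda>k. {u k, v k}) ` {1..n}"
    and indep: "independent_set G (v ` {1..n-1})" and two: "has_two_indep_edges G (u ` {1..n} \<union> {v n})"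
  shows "\<not> extendable 2 G"
proof
  assume ext: "extendable 2 G"
  interpret pm_graph G M using simple pm by unfold_locales
  let ?V = "v ` {1..n-1}" and ?R = "u ` {1..n} \<union> {v n}"
  have "card M = n" using card_verts assms(2) by simp
  with assms(3) M have verts: "verts G = ?V \<union> ?R" and disj: "?V \<inter> ?R = {}" and cardV: "card ?V = n - 1"
    using labelled_partition by auto
  have "card ?R \<le> n + 1"
    using card_image_le[of "{1..n}" u] by (simp add: card_insert_if)
  obtain e1 e2 where e: "e1 \<in> induced_edges G ?R" "e2 \<in> induced_edges G ?R" "e1 \<inter> e2 = {}"
    using two unfolding has_two_indep_edges_def by blast
  then have eE: "e1 \<in> edges G" "e2 \<in> edges G" and eR: "e1 \<union> e2 \<subseteq> ?R"
    unfolding induced_edges_def by auto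
  have "card (e1 \<union> e2) = 4"
    using card_edge[OF eE(1)] card_edge[OF eE(2)] e(3) card_Un_disjoint finite_verts
    by (metis card.infinite add_2_eq_Suc' numeral_Bit0 numeral_One zero_neq_numeral)
  have "e1 \<noteq> e2" using e(3) card_edge[OF eE(1)] by auto
  then have "matching G {e1, e2}" "card {e1, e2} = 2"
    using eE e(3) unfolding matching_def by auto
  then obtain M' where M': "perfect_matching G M'" "{e1, e2} \<subseteq> M'"
    using ext unfolding extendable_def by blast
  interpret M': pm_graph G M' using simple M'(1) by unfold_locales
  have "verts G - ?V - \<Union>{e1, e2} = ?R - (e1 \<union> e2)" using verts disj by auto
  moreover have "card ?V \<le> card (verts G - ?V - \<Union>{e1, e2})"
    using M'.card_independent_le[OF indep M'(2)] eR disj by blast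
  ultimately have "card ?V \<le> card (?R - (e1 \<union> e2))" by simp
  also have "\<dots> = card ?R - 4"
    using card_Diff_subset[OF finite_subset[OF eR] eR] \<open>card (e1 \<union> e2) = 4\<close> by simp
  finally show False using cardV \<open>card ?R \<le> n + 1\<close> assms(3) by linarith
qed

section \<open>Graphs in which any two M-edges induce a 4-cycle\<close>

locale uniquely_swappable = pm_graph +
  assumes edge_iff_not_edge_mate: "apart a b \<Longrightarrow> {a, b} \<in> edges G \<longleftrightarrow> {a, mate b} \<notin> edges G"
begin

lemma edge_mates:
  assumes "{a, b} \<in> edges G" "apart a b"
  shows "{mate a, mate b} \<in> edges G"
proof -
  have "{a, mate b} \<notin> edges G" using edge_iff_not_edge_mate[OF assms(2)] assms(1) by blast
  then have "{mate b, mate a} \<in> edges G"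
    using edge_iff_not_edge_mate[OF apart_sym[OF apart_mate(1)[OF assms(2)]]]
      mate_mate[OF apart_verts(2)[OF assms(2)]] by (simp add: insert_commute)
  then show ?thesis by (simp add: insert_commute)
qed

lemma induced_C4_fibers:
  assumes ab: "apart a b"
  shows "induced_C4 G {a, mate a, b, mate b}"
proof -
  have V: "a \<in> verts G" "b \<in> verts G" using apart_verts[OF ab] by auto
  obtain c where c: "c = b \<or> c = mate b" "{a, c} \<in> edges G"
    using edge_iff_not_edge_mate[OF ab] by blast
  have ac: "apart a c" using c(1) ab apart_mate(1) by blast
  have cV: "c \<in> verts G" using apart_verts(2)[OF ac] .
  note d = apart_distinct[OF ac]
  have S: "{a, mate a, b, mate b} = {a, c, mate c, mate a}" using c(1) mate_mate[OF V(2)] by auto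
  have e: "{a, c} \<in> edges G" "{c, mate c} \<in> edges G" "{mate c, mate a} \<in> edges G" "{mate a, a} \<in> edges G"
    using c(2) edge_mate[OF cV] edge_mates[OF c(2) ac] edge_mate[OF V(1)] by (auto simp: insert_commute)
  have ne: "{a, mate c} \<notin> edges G" "{mate a, c} \<notin> edges G"
    using edge_iff_not_edge_mate[OF ac] c(2) edge_iff_not_edge_mate[OF apart_mate(2)[OF apart_mate(1)[OF ac]]]
      e(3) mate_mate[OF cV] by (auto simp: insert_commute)
  have "induced_edges G {a, c, mate c, mate a} = {{a, c}, {c, mate c}, {mate c, mate a}, {mate a, a}}"
  proof (intro set_eqI iffI)
    fix f assume "f \<in> induced_edges G {a, c, mate c, mate a}"
    then have fE: "f \<in> edges G" and fS: "f \<subseteq> {a, c, mate c, mate a}" by (auto simp: induced_edges_def)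
    obtain p q where pq: "f = {p, q}" "p \<noteq> q" using card_edge[OF fE] by (meson card_2_iff)
    have "p \<in> {a, c, mate c, mate a}" "q \<in> {a, c, mate c, mate a}" using fS pq by auto
    then show "f \<in> {{a, c}, {c, mate c}, {mate c, mate a}, {mate a, a}}"
      using pq fE ne by (auto simp: insert_commute)
  next
    fix f assume "f \<in> {{a, c}, {c, mate c}, {mate c, mate a}, {mate a, a}}"
    then show "f \<in> induced_edges G {a, c, mate c, mate a}" using e by (auto simp: induced_edges_def)
  qed
  moreover have "distinct [a, c, mate c, mate a]" using d by auto
  ultimately show ?thesis unfolding induced_C4_def S by blast
qed

lemma connected: "connected_graph G"
  unfolding connected_graph_def
proof (intro ballI)
  fix a b assume a: "a \<in> verts G" and b: "b \<in> verts G"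
  have step: "(adj G)\<^sup>*\<^sup>* p q" if "{p, q} \<in> edges G" for p q
    using that by (simp add: adj_def r_into_rtranclp)
  show "(adj G)\<^sup>*\<^sup>* a b"
  proof (cases "b = a \<or> b = mate a")
    case True
    then show ?thesis using step[OF edge_mate[OF a]] by auto
  next
    case False
    then have ab: "apart a b" using a b unfolding apart_def by blast
    show ?thesis
    proof (cases "{a, b} \<in> edges G")
      case True
      then show ?thesis by (rule step)
    next
      case False
      then have "{a, mate b} \<in> edges G" using edge_iff_not_edge_mate[OF ab] by blast
      moreover have "{mate b, b} \<in> edges G" using edge_mate[OF b] by (simp add: insert_commute)
      ultimately show ?thesis using step by (meson rtranclp_trans)
    qed
  qed
qed

end

text \<open>The normal form of two disjoint edges that lie in no common perfect matching.\<close>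

locale obstruction = uniquely_swappable +
  fixes x y z :: 'a
  assumes apart_xy: "apart x y" and apart_xz: "apart x z" and apart_yz: "apart y z"
    and edge_xy: "{x, y} \<in> edges G" and edge_mate_x_z: "{mate x, z} \<in> edges G"
    and edge_mate_y_z: "{mate y, z} \<in> edges G"
    and not_coextendable: "\<not> coextendable G {x, y} {mate x, z}"

context uniquely_swappable
begin

lemma coextendable_M_edge:
  assumes rs: "{r, s} \<in> edges G" "apart r s" and p: "p \<in> verts G" "p \<notin> {r, s, mate r, mate s}"
  shows "coextendable G {p, mate p} {r, s}"
proof -
  have "apart p r" "apart p s"
    using p apart_verts[OF rs(2)] mate_mate unfolding apart_def by force+
  then show ?thesis
    using coextendable_by_exchange[of "[p, r, s]" "[(p, mate p), (r, s), (mate r, mate s)]"]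
      rs edge_mate[OF p(1)] edge_mates[OF rs] p(1) apart_verts[OF rs(2)]
      apart_distinct[OF rs(2)] apart_distinct[OF \<open>apart p r\<close>] apart_distinct[OF \<open>apart p s\<close>]
    by (auto simp: pair_edges_def pair_verts_def)
qed

lemma coextendable_far_edges:
  assumes pq: "{p, q} \<in> edges G" "apart p q" and rs: "{r, s} \<in> edges G" "apart r s"
    and far: "p \<notin> {r, s, mate r, mate s}" "q \<notin> {r, s, mate r, mate s}"
  shows "coextendable G {p, q} {r, s}"
proof -
  have V: "p \<in> verts G" "q \<in> verts G" "r \<in> verts G" "s \<in> verts G"
    using apart_verts[OF pq(2)] apart_verts[OF rs(2)] by auto
  have "apart p r" "apart p s" "apart q r" "apart q s"
    using far V mate_mate unfolding apart_def by force+
  then show ?thesis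
    using coextendable_by_exchange[of "[p, q, r, s]" "[(p, q), (mate p, mate q), (r, s), (mate r, mate s)]"]
      pq rs edge_mates[OF pq] edge_mates[OF rs] V apart_distinct[OF pq(2)] apart_distinct[OF rs(2)]
      apart_distinct[OF \<open>apart p r\<close>] apart_distinct[OF \<open>apart p s\<close>]
      apart_distinct[OF \<open>apart q r\<close>] apart_distinct[OF \<open>apart q s\<close>]
    by (auto simp: pair_edges_def pair_verts_def)
qed

lemma obstruction_if_not_coextendable:
  assumes xy: "apart x y" "{x, y} \<in> edges G" and xz: "{mate x, z} \<in> edges G" "z \<noteq> x" "z \<noteq> y"
    and not_coext: "\<not> coextendable G {x, y} {mate x, z}"
  shows "obstruction G M x y z"
proof -
  have V: "x \<in> verts G" "y \<in> verts G" "z \<in> verts G" using apart_verts[OF xy(1)] edge_verts[OF xz(1)] by auto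
  have "apart x z" using V xz edge_neq[OF xz(1)] unfolding apart_def by auto
  have "z \<noteq> mate y"
  proof
    assume "z = mate y"
    then have "coextendable G {x, y} {mate x, z}"
      using coextendable_by_exchange[of "[x, y]" "[(x, y), (mate x, mate y)]"]
        xy edge_mates[OF xy(2,1)] V apart_distinct[OF xy(1)]
      by (auto simp: pair_edges_def pair_verts_def)
    then show False using not_coext by blast
  qed
  then have "apart y z" using V xz unfolding apart_def by auto
  have "{mate y, z} \<in> edges G"
  proof (rule ccontr)
    assume "{mate y, z} \<notin> edges G"
    then have "{mate y, mate z} \<in> edges G"
      using edge_iff_not_edge_mate[OF apart_mate(2)[OF \<open>apart y z\<close>]] by blast
    then have "coextendable G {x, y} {mate x, z}"
      using coextendable_by_exchange[of "[x, y, z]" "[(x, y), (mate x, z), (mate y, mate z)]"]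
        xy xz V apart_distinct[OF xy(1)] apart_distinct[OF \<open>apart x z\<close>] apart_distinct[OF \<open>apart y z\<close>]
      by (auto simp: pair_edges_def pair_verts_def)
    then show False using not_coext by blast
  qed
  then show ?thesis
    using xy xz not_coext \<open>apart x z\<close> \<open>apart y z\<close> by unfold_locales
qed

lemma edge_apart_if_not_in_M:
  assumes "h \<in> edges G" "h \<notin> M" "p \<in> h"
  obtains q where "h = {p, q}" "apart p q"
proof -
  obtain q where q: "h = {p, q}"
    using card_edge[OF assms(1)] assms(3) by (metis card_2_iff insert_commute insertE singletonD)
  moreover have "q \<noteq> mate p" using assms(2) q mate_in_M edge_verts assms(1) by blast
  ultimately show ?thesis using that apart_if_edge assms(1) by blast
qed

lemma coextendable_if_M_edge:
  assumes g: "g \<in> M" and h: "h \<in> edges G" and disj: "g \<inter> h = {}"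
  shows "coextendable G g h"
proof (cases "h \<in> M")
  case True
  then show ?thesis using g perfect unfolding coextendable_def by blast
next
  case False
  obtain p where p: "p \<in> g" using g M_subset_edges card_edge by (metis card_2_iff insertI1 subsetD)
  have pV: "p \<in> verts G" using p g Union_M by blast
  have g_eq: "g = {p, mate p}" using M_edge_eq[OF g p] .
  obtain r where "r \<in> h" using h card_edge by (metis card_2_iff insertI1)
  with h False obtain s where rs: "h = {r, s}" "apart r s" by (rule edge_apart_if_not_in_M)
  have "mate r \<noteq> p" "mate s \<noteq> p"
    using disj g_eq rs apart_verts[OF rs(2)] mate_mate by force+
  then have "p \<notin> {r, s, mate r, mate s}" using disj g_eq rs by auto
  then show ?thesis using coextendable_M_edge[OF _ rs(2) pV] h rs(1) g_eq by simp
qed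

lemma obstruction_if_not_extendable:
  assumes N: "matching G N" "card N = 2" and no_pm: "\<nexists>M'. perfect_matching G M' \<and> N \<subseteq> M'"
  obtains a b c where "obstruction G M a b c"
proof -
  obtain e f where ef: "N = {e, f}" "e \<noteq> f" using N(2) by (meson card_2_iff)
  have E: "e \<in> edges G" "f \<in> edges G" and disj: "e \<inter> f = {}"
    using N(1) ef unfolding matching_def by auto
  have not_coext: "\<not> coextendable G e f" "\<not> coextendable G f e"
    using no_pm ef unfolding coextendable_def by auto
  consider "e \<in> M" | "f \<in> M" | "e \<notin> M" "f \<notin> M" "\<exists>a\<in>e. mate a \<in> f"
    | "e \<notin> M" "f \<notin> M" "\<forall>a\<in>e. mate a \<notin> f" by blast
  then show ?thesis
  proof cases
    case 1
    then show ?thesis using coextendable_if_M_edge[OF 1 E(2) disj] not_coext by blast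
  next
    case 2
    then show ?thesis using coextendable_if_M_edge[OF 2 E(1)] disj not_coext by blast
  next
    case 3
    then obtain a where a: "a \<in> e" "mate a \<in> f" by blast
    obtain b where b: "e = {a, b}" "apart a b" using edge_apart_if_not_in_M[OF E(1) 3(1) a(1)] .
    obtain d where d: "f = {mate a, d}" "apart (mate a) d" using edge_apart_if_not_in_M[OF E(2) 3(2) a(2)] .
    have "d \<noteq> a" "d \<noteq> b" using disj b(1) d(1) by auto
    then show ?thesis
      using obstruction_if_not_coextendable[OF b(2)] b d E not_coext that by blast
  next
    case 4
    obtain p q where pq: "e = {p, q}" "apart p q"
      using E(1) 4(1) card_edge by (metis card_2_iff insertI1 edge_apart_if_not_in_M)
    obtain r s where rs: "f = {r, s}" "apart r s"
      using E(2) 4(2) card_edge by (metis card_2_iff insertI1 edge_apart_if_not_in_M)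
    have "p \<notin> {r, s, mate r, mate s}" "q \<notin> {r, s, mate r, mate s}"
      using 4(3) disj pq rs mate_mate apart_verts[OF rs(2)] by force+
    then show ?thesis
      using coextendable_far_edges[OF _ pq(2) _ rs(2)] E pq(1) rs(1) not_coext by blast
  qed
qed

end

definition nonextendable_labelling ::
    "'a graph \<Rightarrow> nat \<Rightarrow> 'a set set \<Rightarrow> (nat \<Rightarrow> 'a) \<Rightarrow> (nat \<Rightarrow> 'a) \<Rightarrow> bool" where
  "nonextendable_labelling G n M u v \<longleftrightarrow>
     perfect_matching G M \<and> M = (\<lambda>k. {u k, v k}) ` {1..n} \<and>
     forcing_number G M = n - 1 \<and>
     independent_set G (v ` {1..n-1}) \<and> independent_set G (u ` {1..n-1}) \<and>
     has_two_indep_edges G (u ` {1..n} \<union> {v n}) \<and>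
     (\<exists>i j. i \<noteq> j \<and> i \<in> {1..n-1} \<and> j \<in> {1..n-1} \<and>
            {v i, v n} \<in> edges G \<and> {v j, u n} \<in> edges G) \<and>
     (\<forall>k\<in>{1..n-1}. induced_C4 G {u n, v n, u k, v k})"

context obstruction
begin

lemma verts_xyz: "x \<in> verts G" "y \<in> verts G" "z \<in> verts G"
  using apart_verts apart_xy apart_yz by auto

text \<open>An M-alternating path from mate y to mate z through one or two further M-edges would
  complete x y and (mate x) z to a perfect matching.\<close>

lemma no_alternating_path1:
  assumes w: "apart x w" "apart y w" "apart z w" and "{mate y, w} \<in> edges G"
  shows "{mate w, mate z} \<notin> edges G"
proof
  assume "{mate w, mate z} \<in> edges G"
  then have "coextendable G {x, y} {mate x, z}"
    using coextendable_by_exchange[of "[x, y, z, w]" "[(x, y), (mate x, z), (mate y, w), (mate w, mate z)]"]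
      assms edge_xy edge_mate_x_z verts_xyz apart_verts(2)[OF w(1)]
      apart_distinct[OF apart_xy] apart_distinct[OF apart_xz] apart_distinct[OF apart_yz]
      apart_distinct[OF w(1)] apart_distinct[OF w(2)] apart_distinct[OF w(3)]
    by (auto simp: pair_edges_def pair_verts_def)
  then show False using not_coextendable by blast
qed

lemma no_alternating_path2:
  assumes w: "apart x w" "apart y w" "apart z w" and t: "apart x t" "apart y t" "apart z t"
    and "apart w t" "{mate y, w} \<in> edges G" "{mate w, t} \<in> edges G" "{mate t, mate z} \<in> edges G"
  shows False
proof -
  have "coextendable G {x, y} {mate x, z}"
    using coextendable_by_exchange[of "[x, y, z, w, t]"
        "[(x, y), (mate x, z), (mate y, w), (mate w, t), (mate t, mate z)]"]
      assms edge_xy edge_mate_x_z verts_xyz apart_verts(2)[OF w(1)] apart_verts(2)[OF t(1)]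
      apart_distinct[OF apart_xy] apart_distinct[OF apart_xz] apart_distinct[OF apart_yz]
      apart_distinct[OF w(1)] apart_distinct[OF w(2)] apart_distinct[OF w(3)]
      apart_distinct[OF t(1)] apart_distinct[OF t(2)] apart_distinct[OF t(3)] apart_distinct[OF \<open>apart w t\<close>]
    by (auto simp: pair_edges_def pair_verts_def)
  then show False using not_coextendable by blast
qed

text \<open>One colour class of G - {x, mate x}, which turns out to be bipartite with all M-edges
  crossing.\<close>

definition side :: "'a set" where
  "side = {w. apart x w \<and> {mate y, w} \<in> edges G}"

lemma side_subset_verts: "side \<subseteq> verts G"
  unfolding side_def using apart_verts(2) by blast

lemma y_in_side: "y \<in> side"
  unfolding side_def using apart_xy edge_mate[OF verts_xyz(2)] by (simp add: insert_commute)

lemma z_in_side: "z \<in> side"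
  unfolding side_def using apart_xz edge_mate_y_z by simp

lemma mate_y_notin_side: "mate y \<notin> side"
  unfolding side_def using edge_neq by blast

lemma in_side_iff_mate_notin:
  assumes "apart x w"
  shows "w \<in> side \<longleftrightarrow> mate w \<notin> side"
proof -
  have wV: "w \<in> verts G" using apart_verts(2)[OF assms] .
  have xmw: "apart x (mate w)" using apart_mate(1)[OF assms] .
  consider "w = y" | "w = mate y" | "apart (mate y) w"
    using wV verts_xyz(2) mate_in_verts unfolding apart_def by force
  then show ?thesis
  proof cases
    case 1
    then show ?thesis using y_in_side mate_y_notin_side by simp
  next
    case 2
    then show ?thesis using y_in_side mate_y_notin_side verts_xyz(2) by simp
  next
    case 3
    then show ?thesis
      using edge_iff_not_edge_mate[OF 3] assms xmw unfolding side_def by simp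
  qed
qed

lemma apart_if_in_side:
  assumes "w \<in> side" "t \<in> side" "w \<noteq> t"
  shows "apart w t"
proof -
  have "apart x w" using assms(1) unfolding side_def by blast
  then have "t \<noteq> mate w" using in_side_iff_mate_notin assms(1,2) by blast
  then show ?thesis using assms side_subset_verts unfolding apart_def by blast
qed

lemma not_edge_y_side:
  assumes t: "t \<in> side"
  shows "{y, t} \<notin> edges G"
proof (cases "t = y")
  case True
  then show ?thesis using edge_neq[of y y] by blast
next
  case False
  have "apart y t" using apart_if_in_side[OF y_in_side t] False by simp
  then show ?thesis
    using edge_iff_not_edge_mate[OF apart_sym, of y t] t unfolding side_def by (simp add: insert_commute)
qed

lemma not_edge_z_side:
  assumes t: "t \<in> side"
  shows "{z, t} \<notin> edges G"
proof (cases "t = y \<or> t = z")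
  case True
  then show ?thesis using not_edge_y_side[OF z_in_side] edge_neq[of z z] by (auto simp: insert_commute)
next
  case False
  have t_apart: "apart x t" "apart y t" "apart z t"
    using t False apart_if_in_side[OF y_in_side t] apart_if_in_side[OF z_in_side t]
    unfolding side_def by auto
  show ?thesis
  proof
    assume "{z, t} \<in> edges G"
    then have "{mate t, mate z} \<in> edges G"
      using edge_mates[OF _ t_apart(3)] by (simp add: insert_commute)
    then show False using no_alternating_path1[OF t_apart] t unfolding side_def by blast
  qed
qed

lemma not_edge_side_apart:
  assumes w: "w \<in> side" "apart y w" "apart z w" and t: "t \<in> side" "apart y t" "apart z t"
    and "apart w t"
  shows "{w, t} \<notin> edges G"
proof
  assume "{w, t} \<in> edges G"
  have wx: "apart x w" and tx: "apart x t" using w(1) t(1) unfolding side_def by auto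
  have wV: "w \<in> verts G" using apart_verts(2)[OF wx] .
  have mw_z: "apart (mate w) z" using apart_mate(2)[OF apart_sym[OF w(3)]] .
  have "{mate t, mate w} \<in> edges G"
    using edge_mates[OF \<open>{w, t} \<in> edges G\<close> \<open>apart w t\<close>] by (simp add: insert_commute)
  have "{mate w, mate z} \<notin> edges G" using no_alternating_path1[OF wx w(2,3)] w(1) unfolding side_def by blast
  then have "{mate w, z} \<in> edges G" using edge_iff_not_edge_mate[OF mw_z] by blast
  then have "{w, mate z} \<in> edges G" using edge_mates[OF _ mw_z] mate_mate[OF wV] by simp
  then show False
    using no_alternating_path2[OF tx t(2,3) apart_mate(1)[OF wx] apart_mate(1)[OF w(2)]
        apart_mate(1)[OF w(3)] apart_mate(1)[OF apart_sym[OF \<open>apart w t\<close>]]]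
      t(1) \<open>{mate t, mate w} \<in> edges G\<close> mate_mate[OF wV] unfolding side_def by simp
qed

lemma side_independent: "independent_set G side"
  unfolding independent_set_def
proof (intro conjI ballI)
  show "side \<subseteq> verts G" by (rule side_subset_verts)
  fix w t assume w: "w \<in> side" and t: "t \<in> side"
  consider "w \<in> {y, z} \<or> t \<in> {y, z}" | "w = t" | "w \<notin> {y, z}" "t \<notin> {y, z}" "w \<noteq> t" by blast
  then show "{w, t} \<notin> edges G"
  proof cases
    case 1
    then show ?thesis
      using not_edge_y_side[OF w] not_edge_y_side[OF t] not_edge_z_side[OF w] not_edge_z_side[OF t]
      by (auto simp: insert_commute)
  next
    case 2
    then show ?thesis using edge_neq[of w w] by blast
  next
    case 3
    then show ?thesis
      using not_edge_side_apart[OF w _ _ t] apart_if_in_side[OF w t]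
        apart_if_in_side[OF y_in_side w] apart_if_in_side[OF z_in_side w]
        apart_if_in_side[OF y_in_side t] apart_if_in_side[OF z_in_side t] by auto
  qed
qed

lemma mate_side_independent: "independent_set G (mate ` side)"
  unfolding independent_set_def
proof (intro conjI ballI)
  show "mate ` side \<subseteq> verts G" using side_subset_verts mate_in_verts by blast
  fix p q assume "p \<in> mate ` side" "q \<in> mate ` side"
  then obtain w t where wt: "w \<in> side" "t \<in> side" "p = mate w" "q = mate t" by blast
  show "{p, q} \<notin> edges G"
  proof (cases "w = t")
    case True
    then show ?thesis using wt edge_neq[of p p] by blast
  next
    case False
    then have "apart w t" using apart_if_in_side wt by blast
    have "{w, t} \<notin> edges G" using side_independent wt unfolding independent_set_def by blast
    then have "{mate t, w} \<in> edges G"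
      using edge_iff_not_edge_mate[OF \<open>apart w t\<close>] by (simp add: insert_commute)
    then have "{mate t, mate w} \<notin> edges G"
      using edge_iff_not_edge_mate[OF apart_sym[OF apart_mate(1)[OF \<open>apart w t\<close>]]] by blast
    then show ?thesis using wt by (simp add: insert_commute)
  qed
qed

lemma bij_betw_side: "bij_betw (\<lambda>w. {w, mate w}) side (M - {{x, mate x}})"
  unfolding bij_betw_def
proof
  show "inj_on (\<lambda>w. {w, mate w}) side"
  proof (rule inj_onI)
    fix w t assume w: "w \<in> side" and t: "t \<in> side" and eq: "{w, mate w} = {t, mate t}"
    have "apart x w" using w unfolding side_def by blast
    have "t \<noteq> mate w" using in_side_iff_mate_notin[OF \<open>apart x w\<close>] w t by blast
    then show "w = t" using eq by (auto simp: doubleton_eq_iff)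
  qed
  show "(\<lambda>w. {w, mate w}) ` side = M - {{x, mate x}}"
  proof (intro set_eqI iffI)
    fix m assume "m \<in> (\<lambda>w. {w, mate w}) ` side"
    then obtain w where w: "w \<in> side" "m = {w, mate w}" by blast
    then have "apart x w" unfolding side_def by blast
    then show "m \<in> M - {{x, mate x}}"
      using w mate_in_M[OF apart_verts(2)] apart_distinct[OF \<open>apart x w\<close>] by (auto simp: doubleton_eq_iff)
  next
    fix m assume m: "m \<in> M - {{x, mate x}}"
    obtain a where a: "a \<in> m" using m M_subset_edges card_edge by (metis DiffD1 card_2_iff insertI1 subsetD)
    have aV: "a \<in> verts G" using a m Union_M by blast
    have m_eq: "m = {a, mate a}" using M_edge_eq a m by blast
    then have "apart x a" using m aV verts_xyz(1) mate_mate unfolding apart_def by auto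
    show "m \<in> (\<lambda>w. {w, mate w}) ` side"
    proof (cases "a \<in> side")
      case True
      then show ?thesis using m_eq by blast
    next
      case False
      then have "mate a \<in> side" using in_side_iff_mate_notin[OF \<open>apart x a\<close>] by blast
      moreover have "m = {mate a, mate (mate a)}" using m_eq aV by (simp add: insert_commute)
      ultimately show ?thesis by blast
    qed
  qed
qed

lemma M_eq_side: "M = insert {x, mate x} ((\<lambda>w. {w, mate w}) ` side)"
  using bij_betw_imp_surj_on[OF bij_betw_side] mate_in_M[OF verts_xyz(1)] by blast

lemma card_side: "card side = card M - 1"
  using bij_betw_same_card[OF bij_betw_side] mate_in_M[OF verts_xyz(1)] finite_M by simp

lemma two_indep_edges_side: "has_two_indep_edges G (side \<union> {x, mate x})"
  unfolding has_two_indep_edges_def induced_edges_def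
  using edge_xy edge_mate_x_z y_in_side z_in_side
    apart_distinct[OF apart_xy] apart_distinct[OF apart_xz] apart_distinct[OF apart_yz]
  by (intro bexI[of _ "{x, y}"] bexI[of _ "{mate x, z}"]) auto

lemma nonextendable_labelling_exists:
  assumes n: "card M = n" and fn: "forcing_number G M = n - 1"
  shows "\<exists>u v. nonextendable_labelling G n M u v"
proof -
  have "1 \<le> n" using n finite_M M_eq_side by (metis One_nat_def Suc_leI card_gt_0_iff insert_not_empty)
  have "finite side" using side_subset_verts finite_verts finite_subset by blast
  then obtain u0 where u0: "bij_betw u0 {1..n-1} side"
    using ex_bij_betw_nat_finite_1 card_side n by metis
  define u where "u k = (if k = n then x else u0 k)" for k
  define v where "v k = mate (u k)" for k
  have un: "u n = x" "v n = mate x" unfolding u_def v_def by simp_all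
  have "u ` {1..n-1} = u0 ` {1..n-1}"
    using \<open>1 \<le> n\<close> unfolding u_def by (intro image_cong) auto
  then have u_side: "u ` {1..n-1} = side" using bij_betw_imp_surj_on[OF u0] by simp
  then have v_side: "v ` {1..n-1} = mate ` side" unfolding v_def by (simp add: image_image[symmetric])
  have n1: "{1..n} = insert n {1..n-1}" using \<open>1 \<le> n\<close> by auto
  have "(\<lambda>k. {u k, v k}) ` {1..n} = insert {x, mate x} ((\<lambda>w. {w, mate w}) ` u ` {1..n-1})"
    unfolding n1 v_def image_image using un(1) by simp
  then have M_eq: "M = (\<lambda>k. {u k, v k}) ` {1..n}" using M_eq_side u_side by simp
  have two: "has_two_indep_edges G (u ` {1..n} \<union> {v n})"
    using two_indep_edges_side u_side un unfolding n1 by (simp add: insert_commute)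
  obtain i j where ij: "i \<in> {1..n-1}" "u0 i = y" "j \<in> {1..n-1}" "u0 j = z"
    using u0 y_in_side z_in_side unfolding bij_betw_def by (metis imageE)
  then have "i \<noteq> j" "u i = y" "u j = z" using apart_distinct[OF apart_yz] unfolding u_def by auto
  moreover have "{v i, v n} \<in> edges G"
    using edge_mates[OF edge_xy apart_xy] \<open>u i = y\<close> un unfolding v_def by (simp add: insert_commute)
  moreover have "{v j, u n} \<in> edges G"
    using edge_mates[OF edge_mate_x_z apart_mate(2)[OF apart_xz]] \<open>u j = z\<close> un verts_xyz(1)
    unfolding v_def by (simp add: insert_commute)
  ultimately have ij_edges: "\<exists>i j. i \<noteq> j \<and> i \<in> {1..n-1} \<and> j \<in> {1..n-1} \<and>
      {v i, v n} \<in> edges G \<and> {v j, u n} \<in> edges G"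
    using ij by blast
  have C4: "induced_C4 G {u n, v n, u k, v k}" if "k \<in> {1..n-1}" for k
  proof -
    have "apart x (u k)" using that u_side unfolding side_def by blast
    then show ?thesis using induced_C4_fibers un unfolding v_def by simp
  qed
  have "nonextendable_labelling G n M u v"
    unfolding nonextendable_labelling_def u_side v_side
    using perfect M_eq fn mate_side_independent side_independent two ij_edges C4 by blast
  then show ?thesis by blast
qed

end

theorem corollary4p2:
  fixes G :: "'a graph" and n :: nat
  assumes "n \<ge> 3"
    and "G \<in> graphs_pm n"
    and "max_forcing_number G = n - 1"
    and "minimal_Fn1 n G"
  shows "\<not> extendable 2 G \<longleftrightarrow>
    (\<exists>M (u :: nat \<Rightarrow> 'a) v.
       perfect_matching G M \<and> M = (\<lambda>k. {u k, v k}) ` {1..n} \<and>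
       forcing_number G M = n - 1 \<and>
       independent_set G (v ` {1..n-1}) \<and> independent_set G (u ` {1..n-1}) \<and>
       has_two_indep_edges G (u ` {1..n} \<union> {v n}) \<and>
       (\<exists>i j. i \<noteq> j \<and> i \<in> {1..n-1} \<and> j \<in> {1..n-1} \<and>
              {v i, v n} \<in> edges G \<and> {v j, u n} \<in> edges G) \<and>
       (\<forall>k\<in>{1..n-1}. induced_C4 G {u n, v n, u k, v k}))"
proof -
  have simple: "simple_graph G" and card: "card (verts G) = 2 * n" and hpm: "has_perfect_matching G"
    using assms(2) by (auto simp: graphs_pm_def)
  obtain M where pm: "perfect_matching G M" and fn: "forcing_number G M = n - 1"
    using max_forcing_number_attained[OF simple hpm] assms(3) by metis
  interpret pm_graph G M using simple pm by unfold_locales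
  have cM: "card M = n" using card_verts card by simp
  have swappable using swappable_if_forcing_number_ge fn cM assms(1) by simp
  then interpret uniquely_swappable G M
    using edge_iff_not_edge_mate_if_minimal cM assms(1,4) by unfold_locales (auto simp: minimal_Fn1_def)
  have "\<not> extendable 2 G \<longleftrightarrow> (\<exists>M u v. nonextendable_labelling G n M u v)"
  proof
    assume "\<not> extendable 2 G"
    then obtain N where "matching G N" "card N = 2" "\<nexists>M'. perfect_matching G M' \<and> N \<subseteq> M'"
      using connected hpm card assms(1) unfolding extendable_def by auto
    then obtain a b c where "obstruction G M a b c" by (rule obstruction_if_not_extendable)
    then interpret obstruction G M a b c .
    show "\<exists>M u v. nonextendable_labelling G n M u v" using nonextendable_labelling_exists[OF cM fn] by blast
  next
    assume "\<exists>M u v. nonextendable_labelling G n M u v"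
    then show "\<not> extendable 2 G"
      using not_2_extendable_if_labelled[OF simple card assms(1)] unfolding nonextendable_labelling_def by blast
  qed
  then show ?thesis unfolding nonextendable_labelling_def .
qed

end
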